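(* For every rational constant $0<c\le1$ and every $\varepsilon>0$ there is an instance of Maximum Coverage with $k=cn$ for which the ratio between the optimal integral value and the optimal value of the LP $$\max\Bigl\{\sum_{e\in E}w_ex_e : x_e\le\min\Bigl\{1,\sum_{i:e\in S_i}y_i\Bigr\}\ \forall e\in E,\ \sum_{i=1}^n y_i\le cn,\ y_i\ge0\ \forall i\in[n]\Bigr\}$$ is at most $(1+\varepsilon)\rho(c)$.
   Context: Maximum Coverage (MC): given a finite set of elements $E$ with weights $w\colon E\to\mathbb{R}_{\ge0}$, sets $S_1,\dots,S_n\subseteq E$ and an integer $k$, find $X\subseteq[n]$ with $|X|\le k$ maximizing $\sum_{e\in\bigcup_{i\in X}S_i}w_e$. Definition of $\rho(c)$: for $\alpha\in[0,1]$ and integer $m\ge1$ let $\sigma(\alpha,m)=\bigl(1-\alpha c-(1-\alpha)/m\bigr)^m$. If $c=1/s$ for some integer $s\ge1$, then $\rho(c)=1-(1-c)^{1/c}$. Otherwise $1/(s+1)<c<1/s$ for a unique integer $s\ge1$, there is a unique $\alpha^*\in(0,1)$ with $\sigma(\alpha^*,s)=\sigma(\alpha^*,s+1)$, and $\rho(c)=1-\sigma(\alpha^*,s)$. *)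

theory Defs
  imports Complex_Main
begin

definition sigma_mc :: "real \<Rightarrow> real \<Rightarrow> nat \<Rightarrow> real" where
  "sigma_mc c \<alpha> m = (1 - \<alpha> * c - (1 - \<alpha>) / real m) ^ m"

definition rho_mc :: "real \<Rightarrow> real" where
  "rho_mc c = (let s = nat \<lfloor>1 / c\<rfloor> in
     if c = 1 / real s then 1 - (1 - c) ^ s
     else 1 - sigma_mc c (THE \<alpha>. 0 < \<alpha> \<and> \<alpha> < 1 \<and> sigma_mc c \<alpha> s = sigma_mc c \<alpha> (s + 1)) s)"

definition mc_instance :: "nat set \<Rightarrow> (nat \<Rightarrow> real) \<Rightarrow> (nat \<Rightarrow> nat set) \<Rightarrow> nat \<Rightarrow> bool" where
  "mc_instance E w S n \<longleftrightarrow> finite E \<and> (\<forall>e\<in>E. 0 \<le> w e) \<and> (\<forall>i\<in>{1..n}. S i \<subseteq> E)"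

definition mc_opt :: "nat set \<Rightarrow> (nat \<Rightarrow> real) \<Rightarrow> (nat \<Rightarrow> nat set) \<Rightarrow> nat \<Rightarrow> nat \<Rightarrow> real" where
  "mc_opt E w S n k = Max {(\<Sum>e\<in>(\<Union>i\<in>X. S i). w e) | X. X \<subseteq> {1..n} \<and> card X \<le> k}"

definition mc_lp_opt :: "nat set \<Rightarrow> (nat \<Rightarrow> real) \<Rightarrow> (nat \<Rightarrow> nat set) \<Rightarrow> nat \<Rightarrow> real \<Rightarrow> real" where
  "mc_lp_opt E w S n K = Sup {(\<Sum>e\<in>E. w e * x e) | x y.
      (\<forall>e\<in>E. x e \<le> min 1 (\<Sum>i\<in>{i\<in>{1..n}. e \<in> S i}. y i))
    \<and> (\<Sum>i\<in>{1..n}. y i) \<le> K \<and> (\<forall>i\<in>{1..n}. 0 \<le> y i)}"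

end

theory Submission
  imports Defs "HOL-Library.Countable"
begin

text \<open>Let \<open>s = \<lfloor>1/c\<rfloor>\<close>. Split the \<open>n\<close> sets into two blocks of sizes \<open>p n\<close> and \<open>(1 - p) n\<close>, where
  \<open>p/s + (1 - p)/(s + 1) = c\<close>, and take as elements all \<open>s\<close>-tuples over the first block and all
  \<open>(s + 1)\<close>-tuples over the second, with total weights \<open>\<beta>\<close> and \<open>1 - \<beta>\<close>; set \<open>i\<close> covers the tuples
  containing \<open>i\<close>. Giving every set of the first block LP value \<open>1/s\<close> and of the second \<open>1/(s + 1)\<close>
  exhausts the budget \<open>c n\<close> and fully covers all tuples without repetitions, so the LP optimum
  tends to \<open>1\<close> as the blocks grow. Integrally, choosing the fractions \<open>q1, q2\<close> of the two blocks
  covers \<open>\<beta> (1 - (1 - q1)^s) + (1 - \<beta>) (1 - (1 - q2)^(s+1))\<close>, a concave function; its tangent planes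
  at the point \<open>(r1, r2)\<close> given by \<open>\<alpha>*\<close>, where \<open>(1 - r1)^s = (1 - r2)^(s+1) = \<sigma>(\<alpha>*, s)\<close>, show that
  for the right \<open>\<beta>\<close> it is at most \<open>1 - \<sigma>(\<alpha>*, s) = \<rho>(c)\<close> whenever \<open>p q1 + (1 - p) q2 \<le> c\<close>.
  For \<open>c = 1/s\<close> the first block alone gives \<open>1 - (1 - c)^s\<close>.\<close>

lemma power_tangent_le:
  fixes x a :: real
  assumes "0 \<le> x" "0 \<le> a"
  shows "a ^ m + real m * a ^ (m - 1) * (x - a) \<le> x ^ m"
proof (induction m)
  case 0
  then show ?case by simp
next
  case (Suc m)
  have "x * (a ^ m + real m * a ^ (m - 1) * (x - a)) \<le> x ^ Suc m"
    using Suc assms(1) by (simp add: mult_left_mono)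
  moreover have "x * (a ^ m + real m * a ^ (m - 1) * (x - a)) - (a ^ Suc m + real (Suc m) * a ^ m * (x - a))
      = real m * a ^ (m - 1) * (x - a)\<^sup>2"
    by (cases m) (simp_all add: algebra_simps power2_eq_square)
  moreover have "0 \<le> real m * a ^ (m - 1) * (x - a)\<^sup>2"
    using assms(2) by simp
  ultimately show ?case by simp
qed

lemma one_minus_inverse_power_strict_mono:
  assumes "s \<ge> 1"
  shows "(1 - 1 / real s) ^ s < (1 - 1 / real (s + 1)) ^ (s + 1)"
proof (cases "s = 1")
  case True
  then show ?thesis by simp
next
  case False
  then have s: "real s \<ge> 2" using assms by simp
  define x where "x = 1 - 1 / real s"
  define y where "y = 1 - 1 / real (s + 1)"
  have x: "0 < x" and y: "0 < y" unfolding x_def y_def using s by (simp_all add: field_simps)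
  have "2 ^ 2 \<le> real s ^ 2"
    using s by (intro power_mono) auto
  then have q: "0 < real s ^ 2 - 1" by simp
  have "1 + real s * (1 / (real s ^ 2 - 1)) \<le> (1 + 1 / (real s ^ 2 - 1)) ^ s"
    using q by (intro Bernoulli_inequality) (simp add: order.trans[OF _ less_imp_le[OF divide_pos_pos]])
  moreover have "y / x = 1 + 1 / (real s ^ 2 - 1)"
    unfolding x_def y_def using s q by (simp add: field_simps power2_eq_square)
  moreover have "1 / y < 1 + real s * (1 / (real s ^ 2 - 1))"
    unfolding y_def using s q by (simp add: field_simps power2_eq_square)
  ultimately have "1 / y < (y / x) ^ s" by (metis order_less_le_trans)
  then have "x ^ s < y ^ s * y"
    using x y by (simp add: power_divide field_simps)
  then show ?thesis unfolding x_def y_def by (simp add: mult.commute)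
qed

lemma lagrangian_coverage_bound:
  fixes p r1 r2 c :: real
  assumes p: "0 < p" "p < 1"
    and r: "r1 \<le> 1" "r2 \<le> 1"
    and balance: "(1 - r1) ^ m1 = (1 - r2) ^ m2"
    and budget: "p * r1 + (1 - p) * r2 = c"
  obtains \<beta> where "0 \<le> \<beta>" "\<beta> \<le> 1"
    "\<And>q1 q2. q1 \<le> 1 \<Longrightarrow> q2 \<le> 1 \<Longrightarrow> p * q1 + (1 - p) * q2 \<le> c \<Longrightarrow>
       \<beta> * (1 - (1 - q1) ^ m1) + (1 - \<beta>) * (1 - (1 - q2) ^ m2) \<le> 1 - (1 - r1) ^ m1"
proof -
  \<comment> \<open>\<open>u\<close> and \<open>v\<close> are the marginal gains per unit of budget of the two terms at \<open>(r1, r2)\<close>;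
    \<open>\<beta>\<close> equalises them, so the tangent-line bounds add up to \<open>\<mu>\<close> times the budget slack.\<close>
  define u where "u = real m1 * (1 - r1) ^ (m1 - 1) / p"
  define v where "v = real m2 * (1 - r2) ^ (m2 - 1) / (1 - p)"
  define \<beta> where "\<beta> = v / (u + v)"
  define \<mu> where "\<mu> = u * v / (u + v)"
  have uv: "0 \<le> u" "0 \<le> v" unfolding u_def v_def using p r by simp_all
  have pu: "p * u = real m1 * (1 - r1) ^ (m1 - 1)" and pv: "(1 - p) * v = real m2 * (1 - r2) ^ (m2 - 1)"
    unfolding u_def v_def using p by simp_all
  from uv have \<beta>: "0 \<le> \<beta>" "\<beta> \<le> 1" and "0 \<le> \<mu>"
    and \<beta>u: "\<beta> * u = \<mu>" and \<beta>v: "(1 - \<beta>) * v = \<mu>"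
    unfolding \<beta>_def \<mu>_def by (cases "u + v = 0"; auto simp: divide_le_eq_1 field_simps)+
  show thesis
  proof (rule that[OF \<beta>])
    fix q1 q2 :: real
    assume q: "q1 \<le> 1" "q2 \<le> 1" and spent: "p * q1 + (1 - p) * q2 \<le> c"
    have "(1 - r1) ^ m1 - p * u * (q1 - r1) \<le> (1 - q1) ^ m1"
      using power_tangent_le[of "1 - q1" "1 - r1" m1, folded pu] q r by (simp add: algebra_simps)
    from mult_left_mono[OF this \<beta>(1)]
    have A: "\<beta> * (1 - r1) ^ m1 - \<mu> * p * (q1 - r1) \<le> \<beta> * (1 - q1) ^ m1"
      unfolding \<beta>u[symmetric] by (simp add: algebra_simps)
    have "(1 - r2) ^ m2 - (1 - p) * v * (q2 - r2) \<le> (1 - q2) ^ m2"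
      using power_tangent_le[of "1 - q2" "1 - r2" m2, folded pv] q r by (simp add: algebra_simps)
    from mult_left_mono[OF this, of "1 - \<beta>"] \<beta>(2)
    have B: "(1 - \<beta>) * (1 - r2) ^ m2 - \<mu> * (1 - p) * (q2 - r2) \<le> (1 - \<beta>) * (1 - q2) ^ m2"
      unfolding \<beta>v[symmetric] by (simp add: algebra_simps)
    have "\<mu> * (p * (q1 - r1) + (1 - p) * (q2 - r2)) \<le> 0"
      using spent budget \<open>0 \<le> \<mu>\<close> by (intro mult_nonneg_nonpos) (auto simp: algebra_simps)
    then show "\<beta> * (1 - (1 - q1) ^ m1) + (1 - \<beta>) * (1 - (1 - q2) ^ m2) \<le> 1 - (1 - r1) ^ m1"
      using A B balance by (simp add: algebra_simps)
  qed
qed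

lemma sigma_mc_base_eq:
  "1 - \<alpha> * c - (1 - \<alpha>) / real m = (1 - 1 / real m) + \<alpha> * (1 / real m - c)"
  by (simp add: algebra_simps diff_divide_distrib)

lemma sigma_mc_strict_mono:
  assumes "m \<ge> 1" "c < 1 / real m" "0 \<le> a" "a < b"
  shows "sigma_mc c a m < sigma_mc c b m"
proof -
  have "0 \<le> 1 - 1 / real m" using assms(1) by simp
  then show ?thesis
    unfolding sigma_mc_def sigma_mc_base_eq using assms
    by (intro power_strict_mono) (auto intro: add_nonneg_nonneg mult_strict_right_mono)
qed

lemma sigma_mc_strict_antimono:
  assumes "m \<ge> 1" "1 / real m < c" "c \<le> 1" "a < b" "b \<le> 1"
  shows "sigma_mc c b m < sigma_mc c a m"
proof -
  have "0 \<le> (1 - c) + (1 - b) * (c - 1 / real m)"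
    using assms by (intro add_nonneg_nonneg mult_nonneg_nonneg) auto
  moreover have "(1 - c) + (1 - b) * (c - 1 / real m) = 1 - b * c - (1 - b) / real m"
    by (simp add: algebra_simps diff_divide_distrib)
  ultimately show ?thesis
    unfolding sigma_mc_def sigma_mc_base_eq using assms
    by (intro power_strict_mono) (auto simp: sigma_mc_base_eq intro: mult_strict_right_mono)
qed

lemma sigma_mc_balance_unique_exists:
  assumes s: "s \<ge> 1" and c: "1 / real (s + 1) < c" "c < 1 / real s"
  shows "\<exists>!\<alpha>. 0 < \<alpha> \<and> \<alpha> < 1 \<and> sigma_mc c \<alpha> s = sigma_mc c \<alpha> (s + 1)"
proof -
  define f where "f \<alpha> = sigma_mc c \<alpha> s - sigma_mc c \<alpha> (s + 1)" for \<alpha>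
  have "0 < 1 / real (s + 1)" "1 / real s \<le> 1" using s by simp_all
  with c have "0 < c" "c < 1" by linarith+
  have f_mono: "f a < f b" if "0 \<le> a" "a < b" "b \<le> 1" for a b
    using sigma_mc_strict_mono[OF s c(2) that(1,2)] sigma_mc_strict_antimono[of "s + 1" c a b] c \<open>c < 1\<close> that
    unfolding f_def by simp
  have "f 0 < 0"
    using one_minus_inverse_power_strict_mono[OF s] by (simp add: f_def sigma_mc_def)
  moreover have "f 1 = c * (1 - c) ^ s" by (simp add: f_def sigma_mc_def algebra_simps)
  then have "0 < f 1" using \<open>0 < c\<close> \<open>c < 1\<close> by simp
  moreover have "continuous_on {0..1} f"
    unfolding f_def sigma_mc_def by (intro continuous_intros) (use s in auto)
  ultimately obtain \<alpha> where "0 \<le> \<alpha>" "\<alpha> \<le> 1" "f \<alpha> = 0"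
    using IVT'[of f 0 0 1] by auto
  moreover have "\<beta> = \<alpha>" if "0 < \<beta>" "\<beta> < 1" "f \<beta> = 0" for \<beta>
    using f_mono[of \<beta> \<alpha>] f_mono[of \<alpha> \<beta>] that calculation by (cases \<beta> \<alpha> rule: linorder_cases) auto
  ultimately show ?thesis
    using \<open>f 0 < 0\<close> \<open>0 < f 1\<close> unfolding f_def
    by (intro ex1I[of _ \<alpha>]) (auto simp: order.order_iff_strict)
qed

lemma floor_inverse_bracket:
  fixes c :: real
  assumes "0 < c" "c \<le> 1"
  defines "s \<equiv> nat \<lfloor>1 / c\<rfloor>"
  shows "s \<ge> 1" "1 / real (s + 1) < c" "c \<le> 1 / real s"
proof -
  have "1 \<le> \<lfloor>1 / c\<rfloor>" using assms by simp
  then have "real s = of_int \<lfloor>1 / c\<rfloor>" unfolding s_def by (intro of_nat_nat) linarith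
  then have s: "real s \<le> 1 / c" "1 / c < real s + 1" "1 \<le> real s"
    using \<open>1 \<le> \<lfloor>1 / c\<rfloor>\<close> by linarith+
  then show "s \<ge> 1" by simp
  show "1 / real (s + 1) < c" "c \<le> 1 / real s"
    using s assms(1) by (simp_all add: field_simps)
qed

lemma unit_fraction_mix:
  assumes s: "s \<ge> 1" and c: "1 / real (s + 1) < c" "c < 1 / real s"
  defines "p \<equiv> real s * (real (s + 1) * c - 1)"
  shows "0 < p" "p < 1" "p / real s + (1 - p) / real (s + 1) = c"
proof -
  have rs: "real s \<ge> 1" using s by simp
  have "1 < real (s + 1) * c" "real s * c < 1"
    using c rs by (simp_all add: field_simps)
  moreover have "real (s + 1) * (real s * c) < real (s + 1)"
    using \<open>real s * c < 1\<close> by simp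
  ultimately show "0 < p" "p < 1"
    using rs unfolding p_def by (simp add: mult_pos_pos, simp add: algebra_simps)
  show "p / real s + (1 - p) / real (s + 1) = c"
    using rs by (simp add: p_def divide_simps) (simp add: algebra_simps)
qed

lemma sigma_mc_balance_coverage_bound:
  assumes s: "s \<ge> 1" and c: "1 / real (s + 1) < c" "c < 1 / real s"
    and \<alpha>: "0 < \<alpha>" "\<alpha> < 1" "sigma_mc c \<alpha> s = sigma_mc c \<alpha> (s + 1)"
  defines "p \<equiv> real s * (real (s + 1) * c - 1)"
  obtains \<beta> where "0 \<le> \<beta>" "\<beta> \<le> 1"
    "\<And>q1 q2. q1 \<le> 1 \<Longrightarrow> q2 \<le> 1 \<Longrightarrow> p * q1 + (1 - p) * q2 \<le> c \<Longrightarrow>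
       \<beta> * (1 - (1 - q1) ^ s) + (1 - \<beta>) * (1 - (1 - q2) ^ (s + 1)) \<le> 1 - sigma_mc c \<alpha> s"
proof -
  define r1 where "r1 = \<alpha> * c + (1 - \<alpha>) / real s"
  define r2 where "r2 = \<alpha> * c + (1 - \<alpha>) / real (s + 1)"
  have rs: "real s \<ge> 1" using s by simp
  have "1 / real s \<le> 1" using rs by simp
  with c have "c < 1" by linarith
  have p: "0 < p" "p < 1" and "p / real s + (1 - p) / real (s + 1) = c"
    using unit_fraction_mix[OF s c] unfolding p_def by simp_all
  moreover have "p * r1 + (1 - p) * r2 = \<alpha> * c + (1 - \<alpha>) * (p / real s + (1 - p) / real (s + 1))"
    by (simp add: r1_def r2_def algebra_simps)
  ultimately have budget: "p * r1 + (1 - p) * r2 = c"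
    by (simp add: algebra_simps)
  have r: "r1 \<le> 1" "r2 \<le> 1"
    using convex_bound_le[of c 1 "1 / real s" \<alpha> "1 - \<alpha>"] convex_bound_le[of c 1 "1 / real (s + 1)" \<alpha> "1 - \<alpha>"]
      \<open>c < 1\<close> \<alpha> rs by (simp_all add: r1_def r2_def)
  have sigma: "sigma_mc c \<alpha> m = (1 - (\<alpha> * c + (1 - \<alpha>) / real m)) ^ m" for m
    by (simp add: sigma_mc_def algebra_simps)
  obtain \<beta> where "0 \<le> \<beta>" "\<beta> \<le> 1"
    "\<And>q1 q2. q1 \<le> 1 \<Longrightarrow> q2 \<le> 1 \<Longrightarrow> p * q1 + (1 - p) * q2 \<le> c \<Longrightarrow>
       \<beta> * (1 - (1 - q1) ^ s) + (1 - \<beta>) * (1 - (1 - q2) ^ (s + 1)) \<le> 1 - (1 - r1) ^ s"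
    using lagrangian_coverage_bound[OF p r _ budget, of s "s + 1"] \<alpha>(3)
    unfolding sigma r1_def r2_def by blast
  then show thesis using that by (simp add: sigma r1_def)
qed

lemma mc_opt_leI:
  assumes "\<And>X. X \<subseteq> {1..n} \<Longrightarrow> card X \<le> k \<Longrightarrow> (\<Sum>e\<in>(\<Union>i\<in>X. S i). w e) \<le> R"
  shows "mc_opt E w S n k \<le> R"
proof -
  have "{(\<Sum>e\<in>(\<Union>i\<in>X. S i). w e) | X. X \<subseteq> {1..n} \<and> card X \<le> k}
      = (\<lambda>X. \<Sum>e\<in>(\<Union>i\<in>X. S i). w e) ` {X. X \<subseteq> {1..n} \<and> card X \<le> k}"
    by auto
  moreover have "finite {X. X \<subseteq> {1..n} \<and> card X \<le> k}"
    by (rule finite_subset[of _ "Pow {1..n}"]) auto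
  ultimately show ?thesis
    unfolding mc_opt_def using assms by (subst Max_le_iff) (auto intro!: exI[of _ "{}"])
qed

lemma mc_lp_opt_geI:
  assumes "finite E" "\<forall>e\<in>E. 0 \<le> w e"
    and "\<forall>e\<in>E. x e \<le> min 1 (\<Sum>i\<in>{i\<in>{1..n}. e \<in> S i}. y i)"
    and "(\<Sum>i\<in>{1..n}. y i) \<le> K" "\<forall>i\<in>{1..n}. 0 \<le> y i"
  shows "(\<Sum>e\<in>E. w e * x e) \<le> mc_lp_opt E w S n K"
  unfolding mc_lp_opt_def
proof (rule cSup_upper)
  show "(\<Sum>e\<in>E. w e * x e) \<in> {(\<Sum>e\<in>E. w e * x e) | x y.
      (\<forall>e\<in>E. x e \<le> min 1 (\<Sum>i\<in>{i\<in>{1..n}. e \<in> S i}. y i))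
    \<and> (\<Sum>i\<in>{1..n}. y i) \<le> K \<and> (\<forall>i\<in>{1..n}. 0 \<le> y i)}"
    using assms by blast
  show "bdd_above {(\<Sum>e\<in>E. w e * x e) | x y.
      (\<forall>e\<in>E. x e \<le> min 1 (\<Sum>i\<in>{i\<in>{1..n}. e \<in> S i}. y i))
    \<and> (\<Sum>i\<in>{1..n}. y i) \<le> K \<and> (\<forall>i\<in>{1..n}. 0 \<le> y i)}"
    using assms(2) by (intro bdd_aboveI[of _ "\<Sum>e\<in>E. w e"])
      (auto intro!: sum_mono simp: mult_left_le)
qed

definition tuples :: "'a set \<Rightarrow> nat \<Rightarrow> 'a list set" where
  "tuples A m = {xs. set xs \<subseteq> A \<and> length xs = m}"

definition distinct_tuples :: "'a set \<Rightarrow> nat \<Rightarrow> 'a list set" where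
  "distinct_tuples A m = {xs. length xs = m \<and> distinct xs \<and> set xs \<subseteq> A}"

lemma finite_tuples: "finite A \<Longrightarrow> finite (tuples A m)"
  unfolding tuples_def by (rule finite_lists_length_eq)

lemma card_tuples: "finite A \<Longrightarrow> card (tuples A m) = card A ^ m"
  unfolding tuples_def by (rule card_lists_length_eq)

lemma distinct_tuples_subset_tuples: "distinct_tuples A m \<subseteq> tuples A m"
  unfolding distinct_tuples_def tuples_def by auto

lemma finite_distinct_tuples: "finite A \<Longrightarrow> finite (distinct_tuples A m)"
  using finite_subset[OF distinct_tuples_subset_tuples finite_tuples] .

lemma card_tuples_meeting:
  assumes "finite A"
  shows "real (card (tuples A m - tuples (A - X) m)) = real (card A) ^ m - real (card (A - X)) ^ m"
proof -
  have "tuples (A - X) m \<subseteq> tuples A m" unfolding tuples_def by auto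
  moreover have "card (tuples (A - X) m) \<le> card (tuples A m)"
    using assms by (intro card_mono finite_tuples calculation)
  ultimately show ?thesis
    using assms by (simp add: card_Diff_subset finite_tuples card_tuples of_nat_diff)
qed

lemma card_distinct_tuples_ge:
  assumes "finite A" "m \<le> card A"
  shows "(real (card A) - real m) ^ m \<le> real (card (distinct_tuples A m))"
proof -
  have "card (distinct_tuples A m) = \<Prod>{card A - m + 1 .. card A}"
    unfolding distinct_tuples_def using assms by (rule card_lists_distinct_length_eq)
  moreover have "(\<Prod>i\<in>{card A - m + 1 .. card A}. card A - m) \<le> \<Prod>{card A - m + 1 .. card A}"
    by (rule prod_mono) auto
  ultimately have "(card A - m) ^ m \<le> card (distinct_tuples A m)"
    using assms by simp
  then have "real ((card A - m) ^ m) \<le> real (card (distinct_tuples A m))"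
    by (simp only: of_nat_le_iff)
  then show ?thesis
    using assms by (simp add: of_nat_diff)
qed

lemma distinct_tuples_density_ge:
  assumes "finite A" "m \<le> card A" "0 < card A"
  shows "1 - real m * real m / real (card A) \<le> real (card (distinct_tuples A m)) / real (card A) ^ m"
proof -
  have "1 + real m * (- (real m / real (card A))) \<le> (1 + (- (real m / real (card A)))) ^ m"
    using assms by (intro Bernoulli_inequality) simp
  also have "\<dots> = (real (card A) - real m) ^ m / real (card A) ^ m"
    using assms(3) by (simp add: power_divide[symmetric] diff_divide_distrib del: of_nat_0_less_iff)
  also have "\<dots> \<le> real (card (distinct_tuples A m)) / real (card A) ^ m"
    using card_distinct_tuples_ge[OF assms(1,2)] by (simp add: divide_right_mono)
  finally show ?thesis by simp
qed

text \<open>The two blocks of sets are \<open>{1..P1}\<close> and \<open>{P1+1..P1+P2}\<close>; tuples are encoded as naturals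
  by \<open>to_nat\<close>, and since \<open>m1 \<noteq> m2\<close> the length of a tuple tells its block, hence its weight.\<close>

definition block_tuples :: "nat \<Rightarrow> nat \<Rightarrow> nat \<Rightarrow> nat \<Rightarrow> nat list set" where
  "block_tuples P1 P2 m1 m2 = tuples {1..P1} m1 \<union> tuples {P1+1..P1+P2} m2"

definition block_elems :: "nat \<Rightarrow> nat \<Rightarrow> nat \<Rightarrow> nat \<Rightarrow> nat set" where
  "block_elems P1 P2 m1 m2 = to_nat ` block_tuples P1 P2 m1 m2"

definition block_weight :: "nat \<Rightarrow> real \<Rightarrow> real \<Rightarrow> nat \<Rightarrow> real" where
  "block_weight m1 W1 W2 e = (if length (from_nat e :: nat list) = m1 then W1 else W2)"

definition block_sets :: "nat \<Rightarrow> nat \<Rightarrow> nat \<Rightarrow> nat \<Rightarrow> nat \<Rightarrow> nat set" where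
  "block_sets P1 P2 m1 m2 i = to_nat ` {xs \<in> block_tuples P1 P2 m1 m2. i \<in> set xs}"

lemma finite_block_tuples: "finite (block_tuples P1 P2 m1 m2)"
  unfolding block_tuples_def by (simp add: finite_tuples)

lemma mc_instance_block:
  "0 \<le> W1 \<Longrightarrow> 0 \<le> W2 \<Longrightarrow>
    mc_instance (block_elems P1 P2 m1 m2) (block_weight m1 W1 W2) (block_sets P1 P2 m1 m2) (P1 + P2)"
  unfolding mc_instance_def block_elems_def block_sets_def block_weight_def
  using finite_block_tuples by auto

lemma sum_block_weight:
  fixes B1 B2 :: "nat list set"
  assumes "m1 \<noteq> m2" "finite B1" "finite B2"
    and "\<forall>xs\<in>B1. length xs = m1" "\<forall>xs\<in>B2. length xs = m2"
  shows "(\<Sum>e\<in>to_nat ` (B1 \<union> B2). block_weight m1 W1 W2 e) = W1 * real (card B1) + W2 * real (card B2)"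
proof -
  have "(\<Sum>e\<in>to_nat ` (B1 \<union> B2). block_weight m1 W1 W2 e) = (\<Sum>xs\<in>B1 \<union> B2. block_weight m1 W1 W2 (to_nat xs))"
    by (rule sum.reindex_cong[of to_nat]) (auto intro: inj_on_subset[OF inj_to_nat])
  also have "\<dots> = (\<Sum>xs\<in>B1. block_weight m1 W1 W2 (to_nat xs)) + (\<Sum>xs\<in>B2. block_weight m1 W1 W2 (to_nat xs))"
    using assms by (intro sum.union_disjoint) auto
  also have "(\<Sum>xs\<in>B1. block_weight m1 W1 W2 (to_nat xs)) = (\<Sum>xs\<in>B1. W1)"
    using assms by (intro sum.cong) (auto simp: block_weight_def)
  also have "(\<Sum>xs\<in>B2. block_weight m1 W1 W2 (to_nat xs)) = (\<Sum>xs\<in>B2. W2)"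
    using assms by (intro sum.cong) (auto simp: block_weight_def)
  finally show ?thesis by (simp add: mult.commute)
qed

lemma block_coverage_eq:
  assumes "m1 \<noteq> m2"
  shows "(\<Sum>e\<in>(\<Union>i\<in>X. block_sets P1 P2 m1 m2 i). block_weight m1 W1 W2 e)
    = W1 * (real P1 ^ m1 - real (card ({1..P1} - X)) ^ m1)
    + W2 * (real P2 ^ m2 - real (card ({P1+1..P1+P2} - X)) ^ m2)"
proof -
  define C1 where "C1 = tuples {1..P1} m1 - tuples ({1..P1} - X) m1"
  define C2 where "C2 = tuples {P1+1..P1+P2} m2 - tuples ({P1+1..P1+P2} - X) m2"
  have "(\<Union>i\<in>X. block_sets P1 P2 m1 m2 i) = to_nat ` (C1 \<union> C2)"
    unfolding block_sets_def block_tuples_def C1_def C2_def tuples_def by auto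
  moreover have "(\<Sum>e\<in>to_nat ` (C1 \<union> C2). block_weight m1 W1 W2 e) = W1 * real (card C1) + W2 * real (card C2)"
    using assms by (intro sum_block_weight) (auto simp: C1_def C2_def finite_tuples, auto simp: tuples_def)
  ultimately show ?thesis
    using card_tuples_meeting[of "{1..P1}" m1 X] card_tuples_meeting[of "{P1+1..P1+P2}" m2 X]
    by (simp add: C1_def C2_def)
qed

lemma block_sets_containing:
  assumes "xs \<in> block_tuples P1 P2 m1 m2"
  shows "{i\<in>{1..P1+P2}. to_nat xs \<in> block_sets P1 P2 m1 m2 i} = set xs"
  using assms unfolding block_sets_def block_tuples_def tuples_def by (auto dest: injD[OF inj_to_nat])

lemma sum_spread_distinct_tuples:
  fixes P1 P2 :: nat
  assumes "xs \<in> distinct_tuples {1..P1} m1 \<union> distinct_tuples {P1+1..P1+P2} m2" "m1 \<ge> 1" "m2 \<ge> 1"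
  shows "(\<Sum>i\<in>set xs. if i \<le> P1 then 1 / real m1 else 1 / real m2) = 1"
proof -
  from assms(1) have "length xs = m1 \<and> distinct xs \<and> (\<forall>i\<in>set xs. i \<le> P1)
      \<or> length xs = m2 \<and> distinct xs \<and> (\<forall>i\<in>set xs. \<not> i \<le> P1)"
    unfolding distinct_tuples_def by (auto simp: subset_iff)
  then show ?thesis
    using assms(2,3) by (elim disjE) (simp_all add: distinct_card)
qed

lemma block_lp_opt_ge:
  assumes m: "m1 \<noteq> m2" "m1 \<ge> 1" "m2 \<ge> 1" and W: "0 \<le> W1" "0 \<le> W2"
    and K: "real P1 / real m1 + real P2 / real m2 \<le> K"
  shows "W1 * real (card (distinct_tuples {1..P1} m1)) + W2 * real (card (distinct_tuples {P1+1..P1+P2} m2))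
     \<le> mc_lp_opt (block_elems P1 P2 m1 m2) (block_weight m1 W1 W2) (block_sets P1 P2 m1 m2) (P1 + P2) K"
proof -
  \<comment> \<open>the fractional solution spreading \<open>1/m\<close> over every set of a block fully covers
    exactly the tuples without repetitions\<close>
  define D where "D = distinct_tuples {1..P1} m1 \<union> distinct_tuples {P1+1..P1+P2} m2"
  define y where "y i = (if i \<le> P1 then 1 / real m1 else 1 / real m2)" for i
  define x where "x e = (if (from_nat e :: nat list) \<in> D then 1 else 0 :: real)" for e
  have D: "D \<subseteq> block_tuples P1 P2 m1 m2"
    unfolding D_def block_tuples_def using distinct_tuples_subset_tuples by blast
  have "(\<Sum>i\<in>{1..P1+P2}. y i) = (\<Sum>i\<in>{1..P1}. y i) + (\<Sum>i\<in>{P1+1..P1+P2}. y i)"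
    by (rule sum.ub_add_nat) simp
  also have "(\<Sum>i\<in>{1..P1}. y i) = (\<Sum>i\<in>{1..P1}. 1 / real m1)"
    by (intro sum.cong) (auto simp: y_def)
  also have "(\<Sum>i\<in>{P1+1..P1+P2}. y i) = (\<Sum>i\<in>{P1+1..P1+P2}. 1 / real m2)"
    by (intro sum.cong) (auto simp: y_def)
  finally have y_budget: "(\<Sum>i\<in>{1..P1+P2}. y i) \<le> K" using K by simp
  have x_feasible: "x e \<le> min 1 (\<Sum>i\<in>{i\<in>{1..P1+P2}. e \<in> block_sets P1 P2 m1 m2 i}. y i)"
    if e: "e \<in> block_elems P1 P2 m1 m2" for e
  proof -
    obtain xs where xs: "xs \<in> block_tuples P1 P2 m1 m2" "e = to_nat xs"
      using e unfolding block_elems_def by blast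
    have "0 \<le> (\<Sum>i\<in>set xs. y i)"
      by (simp add: y_def sum_nonneg)
    then show ?thesis
      using xs block_sets_containing[OF xs(1)] sum_spread_distinct_tuples[of xs P1 m1 P2 m2] m
      by (cases "xs \<in> D") (simp_all add: x_def y_def D_def)
  qed
  have "(\<Sum>e\<in>block_elems P1 P2 m1 m2. block_weight m1 W1 W2 e * x e)
      \<le> mc_lp_opt (block_elems P1 P2 m1 m2) (block_weight m1 W1 W2) (block_sets P1 P2 m1 m2) (P1 + P2) K"
  proof (rule mc_lp_opt_geI)
    show "finite (block_elems P1 P2 m1 m2)"
      unfolding block_elems_def using finite_block_tuples by simp
    show "\<forall>e\<in>block_elems P1 P2 m1 m2. 0 \<le> block_weight m1 W1 W2 e"
      using W by (simp add: block_weight_def)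
    show "\<forall>e\<in>block_elems P1 P2 m1 m2.
        x e \<le> min 1 (\<Sum>i\<in>{i\<in>{1..P1+P2}. e \<in> block_sets P1 P2 m1 m2 i}. y i)"
      using x_feasible by blast
    show "(\<Sum>i\<in>{1..P1+P2}. y i) \<le> K"
      by (rule y_budget)
    show "\<forall>i\<in>{1..P1 + P2}. 0 \<le> y i"
      by (simp add: y_def)
  qed
  moreover have "(\<Sum>e\<in>block_elems P1 P2 m1 m2. block_weight m1 W1 W2 e * x e)
      = (\<Sum>e\<in>to_nat ` D. block_weight m1 W1 W2 e)"
  proof (rule sum.mono_neutral_cong_right)
    show "finite (block_elems P1 P2 m1 m2)" "to_nat ` D \<subseteq> block_elems P1 P2 m1 m2"
      unfolding block_elems_def using finite_block_tuples D by auto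
  qed (auto simp: x_def block_elems_def)
  moreover have "(\<Sum>e\<in>to_nat ` D. block_weight m1 W1 W2 e)
      = W1 * real (card (distinct_tuples {1..P1} m1)) + W2 * real (card (distinct_tuples {P1+1..P1+P2} m2))"
    unfolding D_def using m(1)
    by (intro sum_block_weight finite_distinct_tuples) (auto simp: distinct_tuples_def)
  ultimately show ?thesis by linarith
qed

lemma distinct_tuples_density_ge_scaled:
  assumes "finite A" "m * m \<le> q" "q \<le> t" "t \<le> card A" "0 < t"
  shows "1 - real q / real t \<le> real (card (distinct_tuples A m)) / real (card A) ^ m"
proof -
  have "m \<le> card A"
    using assms by (cases m) (auto simp: le_square[of m, THEN order.trans])
  moreover have "real m * real m / real (card A) \<le> real q / real t"
    using assms by (intro frac_le) (simp_all flip: of_nat_mult)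
  ultimately show ?thesis
    using distinct_tuples_density_ge[of A m] assms by simp
qed

lemma exists_scale:
  fixes \<epsilon> :: real
  assumes "0 < \<epsilon>"
  obtains t :: nat where "q \<le> t" "0 < t" "real q / real t \<le> \<epsilon> / (1 + \<epsilon>)"
proof -
  obtain t :: nat where t: "real (q + 1) * (1 + \<epsilon>) / \<epsilon> < real t"
    using reals_Archimedean2 by blast
  have "real (q + 1) \<le> real (q + 1) * (1 + \<epsilon>) / \<epsilon>"
    using assms by (simp add: field_simps)
  then have "q < t" using t by linarith
  moreover have "real q * (1 + \<epsilon>) \<le> \<epsilon> * real t"
    using t assms by (simp add: field_simps)
  then have "real q / real t \<le> \<epsilon> / (1 + \<epsilon>)"
    using \<open>q < t\<close> assms by (simp add: field_simps)
  ultimately show thesis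
    using that[of t] by simp
qed

lemma ratio_le_of_bounds:
  fixes opt lp R \<delta> \<epsilon> :: real
  assumes "opt \<le> R" "1 - \<delta> \<le> lp" "0 \<le> R" "0 < \<epsilon>" "\<delta> \<le> \<epsilon> / (1 + \<epsilon>)"
  shows "0 < lp" "opt / lp \<le> (1 + \<epsilon>) * R"
proof -
  have "1 / (1 + \<epsilon>) \<le> 1 - \<delta>"
    using assms(4,5) by (simp add: field_simps)
  then have lp: "1 / (1 + \<epsilon>) \<le> lp" using assms(2) by linarith
  moreover have "0 < 1 / (1 + \<epsilon>)" using assms(4) by simp
  ultimately show "0 < lp" by linarith
  have "opt / lp \<le> R / lp"
    using assms(1) \<open>0 < lp\<close> by (simp add: divide_right_mono)
  also have "\<dots> \<le> R / (1 / (1 + \<epsilon>))"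
    using lp \<open>0 < lp\<close> assms(3,4) by (intro divide_left_mono) simp_all
  finally show "opt / lp \<le> (1 + \<epsilon>) * R" by (simp add: mult.commute)
qed

lemma uncovered_counts:
  assumes "finite X" "card X \<le> k"
  shows "P1 + P2 \<le> k + card ({1..P1} - X) + card ({P1+1..P1+P2} - X)"
    "card ({1..P1} - X) \<le> P1" "card ({P1+1..P1+P2} - X) \<le> P2"
proof -
  have "card ({1..P1} - X) + card ({P1+1..P1+P2} - X) = card ({1..P1+P2} - X)"
    by (subst card_Un_disjoint[symmetric]) (auto intro: arg_cong[where f = card])
  moreover have "card {1..P1+P2} - card X \<le> card ({1..P1+P2} - X)"
    using assms(1) by (rule diff_card_le_card_Diff)
  ultimately show "P1 + P2 \<le> k + card ({1..P1} - X) + card ({P1+1..P1+P2} - X)"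
    using assms(2) by simp
  show "card ({1..P1} - X) \<le> P1" "card ({P1+1..P1+P2} - X) \<le> P2"
    using card_mono[of "{1..P1}" "{1..P1} - X"] card_mono[of "{P1+1..P1+P2}" "{P1+1..P1+P2} - X"] by auto
qed

lemma block_instance_gap:
  fixes c \<epsilon> \<delta> R W1 W2 :: real
  assumes W: "0 \<le> W1" "0 \<le> W2" and m: "m1 \<noteq> m2" "m1 \<ge> 1" "m2 \<ge> 1"
    and n: "P1 + P2 \<ge> 1" and k: "real k = c * real (P1 + P2)"
    and budget: "real P1 / real m1 + real P2 / real m2 \<le> real k"
    and cover: "\<And>d1 d2. d1 \<le> P1 \<Longrightarrow> d2 \<le> P2 \<Longrightarrow> P1 + P2 \<le> k + d1 + d2 \<Longrightarrow>
       W1 * (real P1 ^ m1 - real d1 ^ m1) + W2 * (real P2 ^ m2 - real d2 ^ m2) \<le> R"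
    and lp: "1 - \<delta> \<le> W1 * real (card (distinct_tuples {1..P1} m1))
                      + W2 * real (card (distinct_tuples {P1+1..P1+P2} m2))"
    and R: "0 \<le> R" and \<epsilon>: "0 < \<epsilon>" "\<delta> \<le> \<epsilon> / (1 + \<epsilon>)"
  shows "\<exists>(E::nat set) (w::nat \<Rightarrow> real) (S::nat \<Rightarrow> nat set) (n::nat) (k::nat).
           n \<ge> 1 \<and> mc_instance E w S n \<and> real k = c * real n
         \<and> 0 < mc_lp_opt E w S n (real k)
         \<and> mc_opt E w S n k / mc_lp_opt E w S n (real k) \<le> (1 + \<epsilon>) * R"
proof -
  let ?E = "block_elems P1 P2 m1 m2" and ?w = "block_weight m1 W1 W2" and ?S = "block_sets P1 P2 m1 m2"
  have "mc_opt ?E ?w ?S (P1 + P2) k \<le> R"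
  proof (rule mc_opt_leI)
    fix X assume "X \<subseteq> {1..P1 + P2}" "card X \<le> k"
    then have "finite X" using finite_subset by blast
    then show "(\<Sum>e\<in>(\<Union>i\<in>X. ?S i). ?w e) \<le> R"
      unfolding block_coverage_eq[OF m(1)]
      using cover uncovered_counts[OF _ \<open>card X \<le> k\<close>] by blast
  qed
  moreover have "1 - \<delta> \<le> mc_lp_opt ?E ?w ?S (P1 + P2) (real k)"
    using block_lp_opt_ge[OF m W budget] lp by linarith
  ultimately show ?thesis
    using ratio_le_of_bounds[OF _ _ R \<epsilon>] n k mc_instance_block[OF W] by blast
qed

lemma scaled_power_diff:
  fixes P d W :: real
  assumes "0 < P"
  shows "W / P ^ m * (P ^ m - d ^ m) = W * (1 - (d / P) ^ m)"
  using assms by (simp add: field_simps power_divide)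

lemma integrality_gap_unit_fraction:
  fixes c \<epsilon> :: real
  assumes s: "s \<ge> 1" and c: "c = 1 / real s"
    and t: "(s + 1)\<^sup>2 \<le> t" "0 < t" "real ((s + 1)\<^sup>2) / real t \<le> \<epsilon> / (1 + \<epsilon>)"
    and \<epsilon>: "0 < \<epsilon>"
  shows "\<exists>(E::nat set) (w::nat \<Rightarrow> real) (S::nat \<Rightarrow> nat set) (n::nat) (k::nat).
           n \<ge> 1 \<and> mc_instance E w S n \<and> real k = c * real n
         \<and> 0 < mc_lp_opt E w S n (real k)
         \<and> mc_opt E w S n k / mc_lp_opt E w S n (real k) \<le> (1 + \<epsilon>) * (1 - (1 - c) ^ s)"
proof (rule block_instance_gap[where ?P1.0 = "s * t" and ?P2.0 = 0 and ?m1.0 = s and ?m2.0 = "s + 1" and k = t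
      and ?W1.0 = "1 / real (s * t) ^ s" and ?W2.0 = 0 and \<delta> = "real ((s + 1)\<^sup>2) / real t"])
  have N: "0 < real (s * t)" using s t by simp
  show "real t = c * real (s * t + 0)" "real (s * t) / real s + real 0 / real (s + 1) \<le> real t"
    using s c by simp_all
  show "0 \<le> 1 - (1 - c) ^ s"
    using s c by (simp add: power_le_one)
  show "1 - real ((s + 1)\<^sup>2) / real t \<le> 1 / real (s * t) ^ s * real (card (distinct_tuples {1..s * t} s))
      + 0 * real (card (distinct_tuples {s * t + 1..s * t + 0} (s + 1)))"
    using distinct_tuples_density_ge_scaled[of "{1..s * t}" s "(s + 1)\<^sup>2" t] s t
    by (simp add: power2_eq_square)
  fix d1 d2
  assume "d1 \<le> s * t" "d2 \<le> 0" "s * t + 0 \<le> t + d1 + d2"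
  then have "real (s * t) \<le> real (t + d1)"
    by (intro of_nat_mono) simp
  from mult_left_mono[OF this, of "real s"]
  have "1 - c \<le> real d1 / real (s * t)"
    unfolding c using s t by (simp add: field_simps)
  then have "(1 - c) ^ s \<le> (real d1 / real (s * t)) ^ s"
    using s c by (intro power_mono) simp_all
  then show "1 / real (s * t) ^ s * (real (s * t) ^ s - real d1 ^ s) + 0 * (real 0 ^ (s + 1) - real d2 ^ (s + 1))
      \<le> 1 - (1 - c) ^ s"
    unfolding scaled_power_diff[OF N] by simp
qed (use s t \<epsilon> in auto)

lemma unit_fraction_split:
  fixes a b s :: nat
  assumes "s \<ge> 1" "s * a < b" "b < (s + 1) * a"
  obtains u1 u2 where "0 < u1" "0 < u2" "u1 + u2 = b"
    "real u1 = real s * (real (s + 1) * real a - real b)"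
proof -
  define u1 where "u1 = s * ((s + 1) * a - b)"
  define u2 where "u2 = (s + 1) * (b - s * a)"
  have u1: "real u1 = real s * (real (s + 1) * real a - real b)"
    unfolding u1_def by (simp only: of_nat_mult of_nat_diff[OF less_imp_le[OF assms(3)]])
  have "real u2 = real (s + 1) * (real b - real s * real a)"
    unfolding u2_def by (simp only: of_nat_mult of_nat_diff[OF less_imp_le[OF assms(2)]])
  with u1 have "real (u1 + u2) = real b"
    by (simp add: algebra_simps)
  then have "u1 + u2 = b"
    by (simp only: of_nat_eq_iff)
  moreover have "0 < u1" "0 < u2"
    using assms by (simp_all add: u1_def u2_def)
  ultimately show thesis
    using that u1 by blast
qed

lemma two_block_gap:
  fixes c \<epsilon> \<beta> R :: real
  assumes m: "m1 \<noteq> m2" "m1 \<ge> 1" "m2 \<ge> 1" and \<beta>: "0 \<le> \<beta>" "\<beta> \<le> 1"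
    and P: "t \<le> P1" "t \<le> P2" "0 < t"
    and q: "m1 * m1 \<le> q" "m2 * m2 \<le> q" "q \<le> t" "real q / real t \<le> \<epsilon> / (1 + \<epsilon>)"
    and k: "real k = c * real (P1 + P2)"
    and budget: "real P1 / real m1 + real P2 / real m2 \<le> real k"
    and cover: "\<And>q1 q2. q1 \<le> 1 \<Longrightarrow> q2 \<le> 1 \<Longrightarrow> real P1 * q1 + real P2 * q2 \<le> real k \<Longrightarrow>
       \<beta> * (1 - (1 - q1) ^ m1) + (1 - \<beta>) * (1 - (1 - q2) ^ m2) \<le> R"
    and R: "0 \<le> R" and \<epsilon>: "0 < \<epsilon>"
  shows "\<exists>(E::nat set) (w::nat \<Rightarrow> real) (S::nat \<Rightarrow> nat set) (n::nat) (k::nat).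
           n \<ge> 1 \<and> mc_instance E w S n \<and> real k = c * real n
         \<and> 0 < mc_lp_opt E w S n (real k)
         \<and> mc_opt E w S n k / mc_lp_opt E w S n (real k) \<le> (1 + \<epsilon>) * R"
proof (rule block_instance_gap[OF _ _ m _ k budget _ _ R \<epsilon> q(4)])
  have P_pos: "0 < real P1" "0 < real P2" using P by simp_all
  show "0 \<le> \<beta> / real P1 ^ m1" "0 \<le> (1 - \<beta>) / real P2 ^ m2" "1 \<le> P1 + P2"
    using \<beta> P by simp_all
  have "1 - real q / real t \<le> real (card (distinct_tuples {1..P1} m1)) / real P1 ^ m1"
    using distinct_tuples_density_ge_scaled[of "{1..P1}" m1 q t] P q by simp
  from mult_left_mono[OF this \<beta>(1)]
  have A: "\<beta> * (1 - real q / real t) \<le> \<beta> / real P1 ^ m1 * real (card (distinct_tuples {1..P1} m1))"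
    by simp
  have "1 - real q / real t \<le> real (card (distinct_tuples {P1+1..P1+P2} m2)) / real P2 ^ m2"
    using distinct_tuples_density_ge_scaled[of "{P1+1..P1+P2}" m2 q t] P q by simp
  from mult_left_mono[OF this, of "1 - \<beta>"] \<beta>(2)
  have B: "(1 - \<beta>) * (1 - real q / real t)
      \<le> (1 - \<beta>) / real P2 ^ m2 * real (card (distinct_tuples {P1+1..P1+P2} m2))"
    by simp
  have "1 - real q / real t = \<beta> * (1 - real q / real t) + (1 - \<beta>) * (1 - real q / real t)"
    by (simp add: left_diff_distrib)
  also have "\<dots> \<le> \<beta> / real P1 ^ m1 * real (card (distinct_tuples {1..P1} m1))
      + (1 - \<beta>) / real P2 ^ m2 * real (card (distinct_tuples {P1+1..P1+P2} m2))"
    using A B by (rule add_mono)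
  finally show "1 - real q / real t \<le> \<beta> / real P1 ^ m1 * real (card (distinct_tuples {1..P1} m1))
      + (1 - \<beta>) / real P2 ^ m2 * real (card (distinct_tuples {P1+1..P1+P2} m2))" .
  fix d1 d2
  assume d: "d1 \<le> P1" "d2 \<le> P2" "P1 + P2 \<le> k + d1 + d2"
  have "real P1 * (1 - real d1 / real P1) + real P2 * (1 - real d2 / real P2)
      = real P1 + real P2 - (real d1 + real d2)"
    using P_pos by (simp add: algebra_simps)
  also have "\<dots> \<le> real k"
    using of_nat_mono[OF d(3), where 'a = real] by simp
  finally have "\<beta> * (1 - (1 - (1 - real d1 / real P1)) ^ m1)
      + (1 - \<beta>) * (1 - (1 - (1 - real d2 / real P2)) ^ m2) \<le> R"
    using P_pos by (intro cover) simp_all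
  then show "\<beta> / real P1 ^ m1 * (real P1 ^ m1 - real d1 ^ m1)
      + (1 - \<beta>) / real P2 ^ m2 * (real P2 ^ m2 - real d2 ^ m2) \<le> R"
    unfolding scaled_power_diff[OF P_pos(1)] scaled_power_diff[OF P_pos(2)] by simp
qed

lemma integrality_gap_between_unit_fractions:
  fixes c \<epsilon> \<alpha> :: real and a b s t :: nat
  assumes s: "s \<ge> 1" and c: "c = real a / real b" "1 / real (s + 1) < c" "c < 1 / real s"
    and \<alpha>: "0 < \<alpha>" "\<alpha> < 1" "sigma_mc c \<alpha> s = sigma_mc c \<alpha> (s + 1)"
    and t: "(s + 1)\<^sup>2 \<le> t" "0 < t" "real ((s + 1)\<^sup>2) / real t \<le> \<epsilon> / (1 + \<epsilon>)"
    and \<epsilon>: "0 < \<epsilon>"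
  shows "\<exists>(E::nat set) (w::nat \<Rightarrow> real) (S::nat \<Rightarrow> nat set) (n::nat) (k::nat).
           n \<ge> 1 \<and> mc_instance E w S n \<and> real k = c * real n
         \<and> 0 < mc_lp_opt E w S n (real k)
         \<and> mc_opt E w S n k / mc_lp_opt E w S n (real k) \<le> (1 + \<epsilon>) * (1 - sigma_mc c \<alpha> s)"
proof -
  define p where "p = real s * (real (s + 1) * c - 1)"
  have mix: "p / real s + (1 - p) / real (s + 1) = c"
    using unit_fraction_mix[OF s c(2,3)] by (simp add: p_def)
  obtain \<beta> where \<beta>: "0 \<le> \<beta>" "\<beta> \<le> 1"
    and cover_bound: "\<And>q1 q2. q1 \<le> 1 \<Longrightarrow> q2 \<le> 1 \<Longrightarrow> p * q1 + (1 - p) * q2 \<le> c \<Longrightarrow>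
       \<beta> * (1 - (1 - q1) ^ s) + (1 - \<beta>) * (1 - (1 - q2) ^ (s + 1)) \<le> 1 - sigma_mc c \<alpha> s"
    using sigma_mc_balance_coverage_bound[OF s c(2,3) \<alpha>] unfolding p_def by blast
  have "0 < 1 / real (s + 1)" by simp
  then have b: "0 < real b" using c(1,2) by (cases "b = 0") auto
  have "real (s * a) < real b" "real b < real ((s + 1) * a)"
    using c(2,3)[unfolded c(1)] s b by (simp_all add: field_simps)
  then obtain u1 u2 where u: "0 < u1" "0 < u2" "u1 + u2 = b"
    and u1: "real u1 = real s * (real (s + 1) * real a - real b)"
    using unit_fraction_split[OF s] by (metis of_nat_less_iff)
  have N: "u1 * t + u2 * t = b * t" "0 < real (b * t)"
    using t b unfolding u(3)[symmetric] by (simp add: add_mult_distrib, simp)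
  have "real u1 = p * real b"
    unfolding u1 p_def c(1) using b by (simp add: field_simps)
  then have P: "real (u1 * t) = p * real (b * t)" "real (u2 * t) = (1 - p) * real (b * t)"
    using arg_cong[OF N(1), of real] by (simp_all add: algebra_simps)
  have k: "real (a * t) = c * real (b * t)"
    using b by (simp add: c(1))
  show ?thesis
  proof (rule two_block_gap[OF _ _ _ \<beta> _ _ t(2) _ _ t(1,3)])
    show "real (a * t) = c * real (u1 * t + u2 * t)"
      unfolding N(1) by (rule k)
    have "real (u1 * t) / real s + real (u2 * t) / real (s + 1)
        = real (b * t) * (p / real s + (1 - p) / real (s + 1))"
      unfolding P by (simp add: algebra_simps)
    then show "real (u1 * t) / real s + real (u2 * t) / real (s + 1) \<le> real (a * t)"
      unfolding k mix by (simp add: mult.commute)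
    fix q1 q2 :: real
    assume q: "q1 \<le> 1" "q2 \<le> 1" and "real (u1 * t) * q1 + real (u2 * t) * q2 \<le> real (a * t)"
    then have "real (b * t) * (p * q1 + (1 - p) * q2) \<le> real (b * t) * c"
      unfolding P k by (simp add: algebra_simps)
    then have "p * q1 + (1 - p) * q2 \<le> c"
      using N(2) by (simp add: mult_le_cancel_left_pos)
    with q show "\<beta> * (1 - (1 - q1) ^ s) + (1 - \<beta>) * (1 - (1 - q2) ^ (s + 1)) \<le> 1 - sigma_mc c \<alpha> s"
      by (intro cover_bound)
  next
    show "0 \<le> 1 - sigma_mc c \<alpha> s"
      using cover_bound[of 0 0] c(2) \<open>0 < 1 / real (s + 1)\<close> by simp
  qed (use s u \<epsilon> in \<open>auto simp: power2_eq_square\<close>)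
qed

theorem theorem4p2:
  fixes c \<epsilon> :: real
  assumes "c \<in> \<rat>" and "0 < c" and "c \<le> 1" and "0 < \<epsilon>"
  shows "\<exists>(E::nat set) (w::nat \<Rightarrow> real) (S::nat \<Rightarrow> nat set) (n::nat) (k::nat).
           n \<ge> 1 \<and> mc_instance E w S n \<and> real k = c * real n
         \<and> 0 < mc_lp_opt E w S n (real k)
         \<and> mc_opt E w S n k / mc_lp_opt E w S n (real k) \<le> (1 + \<epsilon>) * rho_mc c"
proof -
  obtain a b :: nat where c_eq: "c = real a / real b"
    using Rats_abs_nat_div_natE[OF assms(1)] assms(2) by (metis abs_of_pos)
  define s where "s = nat \<lfloor>1 / c\<rfloor>"
  have s: "s \<ge> 1" "1 / real (s + 1) < c" "c \<le> 1 / real s"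
    using floor_inverse_bracket[OF assms(2,3)] unfolding s_def by auto
  obtain t where t: "(s + 1)\<^sup>2 \<le> t" "0 < t" "real ((s + 1)\<^sup>2) / real t \<le> \<epsilon> / (1 + \<epsilon>)"
    using exists_scale[OF assms(4)] by blast
  show ?thesis
  proof (cases "c = 1 / real s")
    case True
    then have "rho_mc c = 1 - (1 - c) ^ s"
      by (simp add: rho_mc_def Let_def flip: s_def)
    then show ?thesis
      using integrality_gap_unit_fraction[OF s(1) True t assms(4)] by simp
  next
    case False
    then have c: "1 / real (s + 1) < c" "c < 1 / real s" using s by auto
    define \<alpha> where "\<alpha> = (THE \<alpha>. 0 < \<alpha> \<and> \<alpha> < 1 \<and> sigma_mc c \<alpha> s = sigma_mc c \<alpha> (s + 1))"
    have \<alpha>: "0 < \<alpha>" "\<alpha> < 1" "sigma_mc c \<alpha> s = sigma_mc c \<alpha> (s + 1)"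
      using theI'[OF sigma_mc_balance_unique_exists[OF s(1) c]] unfolding \<alpha>_def by auto
    have "rho_mc c = 1 - sigma_mc c \<alpha> s"
      using False by (simp add: rho_mc_def Let_def \<alpha>_def flip: s_def)
    then show ?thesis
      using integrality_gap_between_unit_fractions[OF s(1) c_eq c \<alpha> t assms(4)] by simp
  qed
qed

end
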